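(* Let $G$ be a finite simple graph with vertices $v_1,\dots,v_n$ ($n\ge 1$) in which no vertex is adjacent to all other vertices, let $d\ge 1$ be an integer, let $G'$ be the graph constructed from $(G,d)$ as described in the context, and let $h=n(n+1)+d$. Suppose $S_1,\dots,S_h$ are pairwise disjoint vertex sets of $G'$, each inducing a connected subgraph, such that for all $i\ne j$ some edge of $G'$ joins a vertex of $S_i$ to a vertex of $S_j$. Then for each $p\in\{1,\dots,n\}$ there exists $q\in\{1,\dots,n+1\}$ such that the single-vertex set $\{b_{p,q}\}$ is one of the sets $S_1,\dots,S_h$.
   Context: Construction of $G'$ from a graph $G$ with vertices $v_1,\dots,v_n$ and an integer $d$: say $v_i$ dominates $v_j$ if $v_i=v_j$ or $v_iv_j$ is an edge of $G$. The vertex set of $G'$ consists of top vertices $t_1,\dots,t_d$, middle vertices $m_1,\dots,m_n$, and bottom vertices $b_{j,k}$ for $1\le j\le n$, $1\le k\le n+1$. Edges: the top vertices form a clique; the middle vertices form an independent set; the bottom vertices form a clique (of size $n(n+1)$); every top vertex is adjacent to every middle vertex; there are no top–bottom edges; middle vertex $m_i$ is adjacent to bottom vertex $b_{j,k}$ if and only if $v_i$ dominates $v_j$ in $G$. *)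

theory Defs
  imports Main
begin

text \<open>The input graph G has vertex set {1..n}; its edges are given by a symmetric,
irreflexive relation E (only its values on {1..n} matter).\<close>

definition simple_graph_on :: "nat \<Rightarrow> (nat \<Rightarrow> nat \<Rightarrow> bool) \<Rightarrow> bool" where
  "simple_graph_on n E \<longleftrightarrow>
     (\<forall>i\<in>{1..n}. \<forall>j\<in>{1..n}. E i j \<longleftrightarrow> E j i) \<and> (\<forall>i\<in>{1..n}. \<not> E i i)"

definition dominates :: "(nat \<Rightarrow> nat \<Rightarrow> bool) \<Rightarrow> nat \<Rightarrow> nat \<Rightarrow> bool" where
  "dominates E i j \<longleftrightarrow> i = j \<or> E i j"

datatype gv = Top nat | Mid nat | Bot nat nat

definition verts' :: "nat \<Rightarrow> nat \<Rightarrow> gv set" where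
  "verts' n d = Top ` {1..d} \<union> Mid ` {1..n} \<union> {Bot j k | j k. j \<in> {1..n} \<and> k \<in> {1..n+1}}"

fun adj0 :: "(nat \<Rightarrow> nat \<Rightarrow> bool) \<Rightarrow> gv \<Rightarrow> gv \<Rightarrow> bool" where
  "adj0 E (Top a) (Top b) = (a \<noteq> b)"
| "adj0 E (Top a) (Mid i) = True"
| "adj0 E (Top a) (Bot j k) = False"
| "adj0 E (Mid i) (Top a) = True"
| "adj0 E (Mid i) (Mid i') = False"
| "adj0 E (Mid i) (Bot j k) = dominates E i j"
| "adj0 E (Bot j k) (Top a) = False"
| "adj0 E (Bot j k) (Mid i) = dominates E i j"
| "adj0 E (Bot j k) (Bot j' k') = ((j, k) \<noteq> (j', k'))"

definition adj' :: "nat \<Rightarrow> nat \<Rightarrow> (nat \<Rightarrow> nat \<Rightarrow> bool) \<Rightarrow> gv \<Rightarrow> gv \<Rightarrow> bool" where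
  "adj' n d E x y \<longleftrightarrow> x \<in> verts' n d \<and> y \<in> verts' n d \<and> adj0 E x y"

definition induces_connected :: "nat \<Rightarrow> nat \<Rightarrow> (nat \<Rightarrow> nat \<Rightarrow> bool) \<Rightarrow> gv set \<Rightarrow> bool" where
  "induces_connected n d E S \<longleftrightarrow> S \<noteq> {} \<and> S \<subseteq> verts' n d \<and>
     (\<forall>x\<in>S. \<forall>y\<in>S. (\<lambda>u v. u \<in> S \<and> v \<in> S \<and> adj' n d E u v)\<^sup>*\<^sup>* x y)"

end

theory Submission
  imports Defs
begin

text \<open>
  Top and bottom vertices are never adjacent, so a branch set without a middle vertex lies in the
  top clique or in the bottom clique. It cannot lie in the top clique: all h branch sets would then
  meet the d + n top and middle vertices. Hence at most n branch sets contain a middle vertex and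
  the others lie in the bottom clique. Counting the n(n+1) bottom vertices shows that the number of
  branch sets with a middle vertex is d + e + u, where e is the excess of the bottom branch sets
  over singletons and u the number of bottom vertices they leave uncovered.

  A column b_{j,1}, ..., b_{j,n+1} forces n + 1 <= u + sum_l |S_l inter column|. A branch set with
  middle but no bottom vertices has at least two middle vertices: if m_a were its only one, every
  bottom branch set would contain a neighbour of m_a, hence a vertex outside the column of some
  non-neighbour v_j of v_a, giving n + 1 <= u + e < n. A branch set with middle and bottom
  vertices contains an uncovered bottom vertex. Double counting the middle vertices now yields
  2d + 2e + u <= n, whereas a column containing no singleton branch set would force
  n + 1 <= u + 2e.
\<close>

lemma card_le_card_if_disjoint_meet:
  assumes "finite X"
    and "\<And>i. i \<in> A \<Longrightarrow> S i \<inter> X \<noteq> {}"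
    and "\<And>i j. i \<in> A \<Longrightarrow> j \<in> A \<Longrightarrow> i \<noteq> j \<Longrightarrow> S i \<inter> S j = {}"
  shows "card A \<le> card X"
proof -
  define rep where "rep i = (SOME x. x \<in> S i \<inter> X)" for i
  have rep: "rep i \<in> S i \<inter> X" if "i \<in> A" for i
  proof -
    from assms(2)[OF that] obtain x where "x \<in> S i \<inter> X" by blast
    then show ?thesis unfolding rep_def by (rule someI)
  qed
  have "inj_on rep A"
  proof (rule inj_onI)
    fix i j assume "i \<in> A" "j \<in> A" "rep i = rep j"
    then show "i = j" using rep[of i] rep[of j] assms(3)[of i j] by auto
  qed
  moreover have "rep ` A \<subseteq> X"
    using rep by blast
  ultimately show ?thesis
    using card_inj_on_le assms(1) by blast
qed

definition tops :: "nat \<Rightarrow> gv set" where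
  "tops d = Top ` {1..d}"

definition mids :: "nat \<Rightarrow> gv set" where
  "mids n = Mid ` {1..n}"

definition bots :: "nat \<Rightarrow> gv set" where
  "bots n = {Bot j k | j k. j \<in> {1..n} \<and> k \<in> {1..n+1}}"

definition column :: "nat \<Rightarrow> nat \<Rightarrow> gv set" where
  "column n j = Bot j ` {1..n+1}"

lemma verts'_eq: "verts' n d = tops d \<union> mids n \<union> bots n"
  unfolding verts'_def tops_def mids_def bots_def ..

lemma bots_eq_image: "bots n = (\<lambda>(j, k). Bot j k) ` ({1..n} \<times> {1..n+1})"
  by (auto simp: bots_def)

lemma finite_tops [simp]: "finite (tops d)"
  and finite_mids [simp]: "finite (mids n)"
  and finite_bots [simp]: "finite (bots n)"
  by (simp_all add: tops_def mids_def bots_eq_image)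

lemma card_tops [simp]: "card (tops d) = d"
  by (simp add: tops_def card_image inj_on_def)

lemma card_mids [simp]: "card (mids n) = n"
  by (simp add: mids_def card_image inj_on_def)

lemma card_bots [simp]: "card (bots n) = n * (n + 1)"
  by (simp add: bots_eq_image card_image inj_on_def)

lemma card_column [simp]: "card (column n j) = n + 1"
  by (simp add: column_def card_image inj_on_def)

lemma column_subset_bots: "j \<in> {1..n} \<Longrightarrow> column n j \<subseteq> bots n"
  by (auto simp: column_def bots_def)

lemma not_adj0_tops_bots: "x \<in> tops d \<Longrightarrow> y \<in> bots n \<Longrightarrow> \<not> adj0 E x y"
  by (auto simp: tops_def bots_def)

lemma rtranclp_adj'_tops:
  assumes "(\<lambda>u v. u \<in> A \<and> v \<in> A \<and> adj' n d E u v)\<^sup>*\<^sup>* x y"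
    and "A \<subseteq> tops d \<union> bots n" and "x \<in> tops d"
  shows "y \<in> tops d"
  using assms
proof (induction rule: rtranclp_induct)
  case (step y z)
  then have "z \<in> tops d \<union> bots n" "adj0 E y z"
    by (auto simp: adj'_def)
  with step.IH step.prems show ?case
    using not_adj0_tops_bots by blast
qed

lemma induces_connected_subset_tops_or_bots:
  assumes "induces_connected n d E A" and "A \<inter> mids n = {}"
  shows "A \<subseteq> tops d \<or> A \<subseteq> bots n"
proof -
  have "A \<subseteq> tops d \<union> mids n \<union> bots n"
    using assms(1) by (simp add: induces_connected_def verts'_eq)
  with assms(2) have A: "A \<subseteq> tops d \<union> bots n"
    by blast
  show ?thesis
  proof (cases "A \<inter> tops d = {}")
    case True
    with A show ?thesis by blast
  next
    case False
    then obtain x where x: "x \<in> A" "x \<in> tops d" by blast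
    have "y \<in> tops d" if "y \<in> A" for y
    proof -
      have "(\<lambda>u v. u \<in> A \<and> v \<in> A \<and> adj' n d E u v)\<^sup>*\<^sup>* x y"
        using assms(1) x(1) that unfolding induces_connected_def by blast
      then show ?thesis
        using rtranclp_adj'_tops A x(2) by blast
    qed
    then show ?thesis by blast
  qed
qed

locale clique_minor_model =
  fixes n d :: nat and E :: "nat \<Rightarrow> nat \<Rightarrow> bool" and S :: "nat \<Rightarrow> gv set"
  assumes n_ge_1: "n \<ge> 1" and d_ge_1: "d \<ge> 1"
    and no_dominating_vertex: "\<And>i. i \<in> {1..n} \<Longrightarrow> \<exists>j\<in>{1..n}. \<not> dominates E i j"
    and S_disjoint: "\<And>i j. i \<in> {1..n*(n+1)+d} \<Longrightarrow> j \<in> {1..n*(n+1)+d} \<Longrightarrow> i \<noteq> j \<Longrightarrow>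
      S i \<inter> S j = {}"
    and S_connected: "\<And>i. i \<in> {1..n*(n+1)+d} \<Longrightarrow> induces_connected n d E (S i)"
    and S_touching: "\<And>i j. i \<in> {1..n*(n+1)+d} \<Longrightarrow> j \<in> {1..n*(n+1)+d} \<Longrightarrow> i \<noteq> j \<Longrightarrow>
      \<exists>x\<in>S i. \<exists>y\<in>S j. adj0 E x y"
begin

abbreviation branches :: "nat set" where
  "branches \<equiv> {1..n*(n+1)+d}"

lemma S_subset: "i \<in> branches \<Longrightarrow> S i \<subseteq> tops d \<union> mids n \<union> bots n"
  using S_connected by (simp add: induces_connected_def verts'_eq)

lemma S_nonempty: "i \<in> branches \<Longrightarrow> S i \<noteq> {}"
  using S_connected by (simp add: induces_connected_def)

lemma finite_S: "i \<in> branches \<Longrightarrow> finite (S i)"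
  using S_subset by (meson finite_UnI finite_bots finite_mids finite_tops finite_subset)

lemma not_subset_tops:
  assumes i: "i \<in> branches"
  shows "\<not> S i \<subseteq> tops d"
proof
  assume top: "S i \<subseteq> tops d"
  have "S j \<inter> (tops d \<union> mids n) \<noteq> {}" if j: "j \<in> branches" for j
  proof (cases "j = i")
    case True
    with i top S_nonempty show ?thesis by blast
  next
    case False
    then obtain x y where xy: "x \<in> S i" "y \<in> S j" "adj0 E x y"
      using S_touching[OF i j] by metis
    then have "y \<notin> bots n"
      using top not_adj0_tops_bots by blast
    with xy(2) S_subset[OF j] show ?thesis by blast
  qed
  then have "card branches \<le> card (tops d \<union> mids n)"
    using S_disjoint by (intro card_le_card_if_disjoint_meet) auto
  also have "\<dots> \<le> d + n"
    using card_Un_le[of "tops d" "mids n"] by simp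
  finally show False
    using n_ge_1 by (simp add: algebra_simps)
qed

definition mid_branches :: "nat set" where
  "mid_branches = {i \<in> branches. S i \<inter> mids n \<noteq> {}}"

definition bot_branches :: "nat set" where
  "bot_branches = branches - mid_branches"

definition uncovered :: "gv set" where
  "uncovered = bots n - (\<Union>l\<in>bot_branches. S l)"

definition excess :: nat where
  "excess = (\<Sum>l\<in>bot_branches. card (S l) - 1)"

lemma mid_branches_subset: "mid_branches \<subseteq> branches"
  by (auto simp: mid_branches_def)

lemma disjoint_mid_branches:
  "i \<in> mid_branches \<Longrightarrow> j \<in> mid_branches \<Longrightarrow> i \<noteq> j \<Longrightarrow> S i \<inter> S j = {}"
  using S_disjoint mid_branches_subset by blast

lemma finite_mid_branches: "finite mid_branches"
  and finite_bot_branches: "finite bot_branches"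
  by (simp_all add: mid_branches_def bot_branches_def)

lemma bot_branch_subset_bots:
  assumes "l \<in> bot_branches"
  shows "S l \<subseteq> bots n"
proof -
  from assms have l: "l \<in> branches" and no_mids: "S l \<inter> mids n = {}"
    by (auto simp: bot_branches_def mid_branches_def)
  show ?thesis
    using induces_connected_subset_tops_or_bots[OF S_connected[OF l] no_mids] not_subset_tops[OF l]
    by blast
qed

lemma card_mid_branches_le: "card mid_branches \<le> n"
proof -
  have "card mid_branches \<le> card (mids n)"
    using disjoint_mid_branches
    by (intro card_le_card_if_disjoint_meet) (auto simp: mid_branches_def)
  then show ?thesis by simp
qed

lemma bots_eq_uncovered_Un: "bots n = uncovered \<union> (\<Union>l\<in>bot_branches. S l)"
  using bot_branch_subset_bots unfolding uncovered_def by blast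

lemma card_mid_branches_eq: "card mid_branches = d + excess + card uncovered"
proof -
  have "n * (n + 1) = card uncovered + card (\<Union>l\<in>bot_branches. S l)"
    unfolding card_bots[symmetric] bots_eq_uncovered_Un
    by (rule card_Un_disjoint) (auto simp: uncovered_def bot_branches_def finite_S)
  also have "card (\<Union>l\<in>bot_branches. S l) = (\<Sum>l\<in>bot_branches. card (S l))"
    using S_disjoint by (intro card_UN_disjoint) (auto simp: bot_branches_def finite_S)
  also have "\<dots> = (\<Sum>l\<in>bot_branches. (card (S l) - 1) + 1)"
    by (rule sum.cong) (auto simp: bot_branches_def finite_S S_nonempty Suc_leI card_gt_0_iff)
  also have "\<dots> = excess + card bot_branches"
    unfolding excess_def sum.distrib by simp
  also have "card bot_branches = n * (n + 1) + d - card mid_branches"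
    using card_Diff_subset[OF finite_mid_branches mid_branches_subset] by (simp add: bot_branches_def)
  finally show ?thesis
    using card_mid_branches_le n_ge_1 by (simp add: algebra_simps)
qed

lemma uncovered_excess_less: "card uncovered + excess < n"
  using card_mid_branches_eq card_mid_branches_le d_ge_1 by linarith

lemma column_bound:
  assumes "j \<in> {1..n}"
  shows "n + 1 \<le> card uncovered + (\<Sum>l\<in>bot_branches. card (S l \<inter> column n j))"
proof -
  have "n + 1 = card (column n j)"
    by simp
  also have "\<dots> \<le> card (uncovered \<union> (\<Union>l\<in>bot_branches. S l \<inter> column n j))"
  proof (rule card_mono)
    show "column n j \<subseteq> uncovered \<union> (\<Union>l\<in>bot_branches. S l \<inter> column n j)"
      using column_subset_bots[OF assms] bots_eq_uncovered_Un by blast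
  qed (simp add: uncovered_def finite_bot_branches column_def)
  also have "\<dots> \<le> card uncovered + card (\<Union>l\<in>bot_branches. S l \<inter> column n j)"
    by (rule card_Un_le)
  also have "\<dots> \<le> card uncovered + (\<Sum>l\<in>bot_branches. card (S l \<inter> column n j))"
    using card_UN_le[OF finite_bot_branches] by (rule add_left_mono)
  finally show ?thesis .
qed

lemma two_mids_if_no_bots:
  assumes i: "i \<in> mid_branches" and no_bots: "S i \<inter> bots n = {}"
  shows "2 \<le> card (S i \<inter> mids n)"
proof (rule ccontr)
  assume "\<not> ?thesis"
  moreover have "card (S i \<inter> mids n) \<noteq> 0"
    using i by (simp add: mid_branches_def card_eq_0_iff)
  ultimately have "card (S i \<inter> mids n) = 1"
    by linarith
  then obtain a where a: "S i \<inter> mids n = {Mid a}" "a \<in> {1..n}"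
    by (metis card_1_singletonE insertI1 Int_iff mids_def imageE)
  obtain j where j: "j \<in> {1..n}" "\<not> dominates E a j"
    using no_dominating_vertex[OF a(2)] by blast
  have "card (S l \<inter> column n j) \<le> card (S l) - 1" if l: "l \<in> bot_branches" for l
  proof -
    have iB: "i \<in> branches" and lB: "l \<in> branches" "i \<noteq> l"
      using i l mid_branches_subset by (auto simp: bot_branches_def)
    then obtain x y where xy: "x \<in> S i" "y \<in> S l" "adj0 E x y"
      using S_touching by metis
    have "y \<in> bots n"
      using xy(2) bot_branch_subset_bots[OF l] by blast
    then obtain j' k where y: "y = Bot j' k"
      by (auto simp: bots_def)
    have "x \<notin> tops d"
      using xy(3) \<open>y \<in> bots n\<close> not_adj0_tops_bots by blast
    then have "x = Mid a"
      using xy(1) S_subset[OF iB] no_bots a(1) by blast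
    with xy(3) y j(2) have "y \<notin> column n j"
      by (auto simp: column_def)
    with xy(2) have "S l \<inter> column n j \<subset> S l"
      by blast
    then have "card (S l \<inter> column n j) < card (S l)"
      by (rule psubset_card_mono[OF finite_S[OF lB(1)]])
    then show ?thesis
      by simp
  qed
  then have "(\<Sum>l\<in>bot_branches. card (S l \<inter> column n j)) \<le> excess"
    unfolding excess_def by (rule sum_mono)
  with column_bound[OF j(1)] uncovered_excess_less show False
    by linarith
qed

lemma card_mid_branches_meeting_bots_le:
  "card {i \<in> mid_branches. S i \<inter> bots n \<noteq> {}} \<le> card uncovered"
proof (rule card_le_card_if_disjoint_meet)
  fix i assume "i \<in> {i \<in> mid_branches. S i \<inter> bots n \<noteq> {}}"
  then have i: "i \<in> mid_branches" and "S i \<inter> bots n \<noteq> {}"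
    by auto
  then obtain x where x: "x \<in> S i" "x \<in> bots n"
    by blast
  have "x \<notin> S l" if "l \<in> bot_branches" for l
  proof -
    have "i \<in> branches" "l \<in> branches" "i \<noteq> l"
      using that i mid_branches_subset by (auto simp: bot_branches_def)
    with x(1) S_disjoint show ?thesis
      by blast
  qed
  with x show "S i \<inter> uncovered \<noteq> {}"
    by (auto simp: uncovered_def)
next
  fix i j assume "i \<in> {i \<in> mid_branches. S i \<inter> bots n \<noteq> {}}"
    and "j \<in> {i \<in> mid_branches. S i \<inter> bots n \<noteq> {}}" and "i \<noteq> j"
  then show "S i \<inter> S j = {}"
    using disjoint_mid_branches by blast
qed (simp add: uncovered_def)

lemma double_count_mids: "2 * card mid_branches \<le> n + card uncovered"
proof -
  let ?meets_bots = "\<lambda>i. if S i \<inter> bots n \<noteq> {} then 1 else 0 :: nat"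
  have "(\<Sum>i\<in>mid_branches. card (S i \<inter> mids n)) = card (\<Union>i\<in>mid_branches. S i \<inter> mids n)"
    using disjoint_mid_branches
    by (intro card_UN_disjoint[symmetric]) (auto simp: finite_mid_branches)
  also have "\<dots> \<le> card (mids n)"
    by (rule card_mono) auto
  finally have mids_sum: "(\<Sum>i\<in>mid_branches. card (S i \<inter> mids n)) \<le> n"
    by simp
  have "2 * card mid_branches = (\<Sum>i\<in>mid_branches. 2)"
    by simp
  also have "\<dots> \<le> (\<Sum>i\<in>mid_branches. card (S i \<inter> mids n) + ?meets_bots i)"
  proof (rule sum_mono)
    fix i assume i: "i \<in> mid_branches"
    then have "card (S i \<inter> mids n) \<ge> 1"
      by (auto simp: mid_branches_def card_gt_0_iff Suc_le_eq)
    with two_mids_if_no_bots[OF i] show "2 \<le> card (S i \<inter> mids n) + ?meets_bots i"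
      by (cases "S i \<inter> bots n = {}") auto
  qed
  also have "\<dots> = (\<Sum>i\<in>mid_branches. card (S i \<inter> mids n))
      + card {i \<in> mid_branches. S i \<inter> bots n \<noteq> {}}"
    by (simp add: sum.distrib sum.If_cases finite_mid_branches Int_def)
  finally show ?thesis
    using mids_sum card_mid_branches_meeting_bots_le by linarith
qed

lemma excess_uncovered_bound: "2 * d + 2 * excess + card uncovered \<le> n"
  using double_count_mids card_mid_branches_eq by linarith

theorem singleton_branch_in_column:
  assumes p: "p \<in> {1..n}"
  shows "\<exists>q\<in>{1..n+1}. \<exists>i\<in>branches. S i = {Bot p q}"
proof (rule ccontr)
  assume no_singleton: "\<not> ?thesis"
  have "card (S l \<inter> column n p) \<le> 2 * (card (S l) - 1)" if l: "l \<in> bot_branches" for l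
  proof -
    have lB: "l \<in> branches"
      using l by (simp add: bot_branches_def)
    have "card (S l) \<noteq> 0"
      using S_nonempty[OF lB] finite_S[OF lB] by simp
    then consider "card (S l) \<ge> 2" | "card (S l) = 1"
      by linarith
    then show ?thesis
    proof cases
      case 1
      have "card (S l \<inter> column n p) \<le> card (S l)"
        by (rule card_mono[OF finite_S[OF lB]]) blast
      with 1 show ?thesis
        by linarith
    next
      case 2
      then obtain y where "S l = {y}"
        using card_1_singletonE by blast
      with no_singleton lB have "y \<notin> column n p"
        by (auto simp: column_def)
      with \<open>S l = {y}\<close> show ?thesis
        by simp
    qed
  qed
  then have "(\<Sum>l\<in>bot_branches. card (S l \<inter> column n p)) \<le> 2 * excess"
    unfolding excess_def sum_distrib_left by (rule sum_mono)
  with column_bound[OF p] excess_uncovered_bound d_ge_1 show False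
    by linarith
qed

end

theorem lemma4:
  fixes n d :: nat and E :: "nat \<Rightarrow> nat \<Rightarrow> bool" and S :: "nat \<Rightarrow> gv set"
  assumes "n \<ge> 1" and "d \<ge> 1"
    and "simple_graph_on n E"
    and "\<forall>i\<in>{1..n}. \<exists>j\<in>{1..n}. j \<noteq> i \<and> \<not> E i j"
    and "\<forall>i\<in>{1..n*(n+1)+d}. S i \<subseteq> verts' n d"
    and "\<forall>i\<in>{1..n*(n+1)+d}. \<forall>j\<in>{1..n*(n+1)+d}. i \<noteq> j \<longrightarrow> S i \<inter> S j = {}"
    and "\<forall>i\<in>{1..n*(n+1)+d}. induces_connected n d E (S i)"
    and "\<forall>i\<in>{1..n*(n+1)+d}. \<forall>j\<in>{1..n*(n+1)+d}. i \<noteq> j \<longrightarrow>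
           (\<exists>x\<in>S i. \<exists>y\<in>S j. adj' n d E x y)"
  shows "\<forall>p\<in>{1..n}. \<exists>q\<in>{1..n+1}. \<exists>i\<in>{1..n*(n+1)+d}. S i = {Bot p q}"
proof -
  interpret clique_minor_model n d E S
  proof
    show "\<exists>j\<in>{1..n}. \<not> dominates E i j" if "i \<in> {1..n}" for i
      using assms(4) that unfolding dominates_def by fastforce
    show "\<exists>x\<in>S i. \<exists>y\<in>S j. adj0 E x y"
      if "i \<in> {1..n*(n+1)+d}" "j \<in> {1..n*(n+1)+d}" "i \<noteq> j" for i j
      using assms(8) that unfolding adj'_def by blast
  qed (use assms(1,2,6,7) in auto)
  show ?thesis
    using singleton_branch_in_column by blast
qed

end
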